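(* Let $n\ge 2$ be an integer and $k$ an integer with $0\le k\le n-1$. Then $$e_k\left(\left\{\csc^2\left(\tfrac{j\pi}{2n}\right) : j=1,\dots,n-1\right\}\right) = \frac{4^k\,(n+k)!\,(n-1)!}{(2k+1)!\,(n-k-1)!\,n!}.$$
   Context: $e_k(\alpha_1,\dots,\alpha_m)$ denotes the degree-$k$ elementary symmetric function of $\alpha_1,\dots,\alpha_m$ (with $e_0=1$). *)

theory Defs
  imports Complex_Main
begin

definition elem_sym :: "nat \<Rightarrow> ('i \<Rightarrow> 'a::comm_ring_1) \<Rightarrow> 'i set \<Rightarrow> 'a" where
  "elem_sym k a I = (\<Sum>S\<in>{S. S \<subseteq> I \<and> card S = k}. \<Prod>i\<in>S. a i)"

end

(*
  The polynomial Q_n = U_(n-1)(1 - 2x) (Chebyshev of the second kind) satisfies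
  sin (2 n t) = sin (2 t) * Q_n (sin^2 t) and has coefficients (-4)^k * C(n+k, 2k+1).
  So Q_n has degree n - 1, Q_n(0) = n, and its roots are the n - 1 distinct numbers
  sin^2 (j pi / 2n), 0 < j < n.  Hence prod_j (1 + t / sin^2 (j pi / 2n)) = Q_n(-t) / n,
  and comparing the coefficients of t^k gives e_k = 4^k * C(n+k, 2k+1) / n.
*)

theory Submission
  imports Defs "HOL-Computational_Algebra.Polynomial"
begin

lemma prod_monom:
  assumes "finite S"
  shows "(\<Prod>i\<in>S. monom (a i) (d i)) = monom (prod a S) (\<Sum>i\<in>S. d i)"
  using assms by (induction S rule: finite_induct) (simp_all add: mult_monom)

lemma elem_sym_eq_coeff_prod:
  fixes y :: "'i \<Rightarrow> 'a::comm_ring_1"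
  assumes "finite J"
  shows "elem_sym k y J = coeff (\<Prod>j\<in>J. [:1, y j:]) k"
proof -
  have "(\<Prod>j\<in>J. [:1, y j:]) = (\<Prod>j\<in>J. monom (y j) 1 + 1)"
    by (intro prod.cong) (auto simp: poly_eq_iff coeff_pCons split: nat.split)
  also have "\<dots> = (\<Sum>S\<in>Pow J. monom (prod y S) (card S))"
    using assms by (auto simp: prod_add prod_monom intro!: sum.cong dest: rev_finite_subset)
  finally have "coeff (\<Prod>j\<in>J. [:1, y j:]) k = (\<Sum>S\<in>Pow J. if card S = k then prod y S else 0)"
    by (simp add: coeff_sum)
  also have "\<dots> = elem_sym k y J"
    using assms by (simp add: sum.If_cases Int_def elem_sym_def)
  finally show ?thesis ..
qed

lemma degree_prod_linear_factors_le: "degree (\<Prod>j\<in>J. [:a j, b j:]) \<le> card J"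
proof (induction J rule: infinite_finite_induct)
  case (insert j J)
  have "degree (\<Prod>i\<in>insert j J. [:a i, b i:]) \<le> degree [:a j, b j:] + degree (\<Prod>i\<in>J. [:a i, b i:])"
    unfolding prod.insert[OF insert(1,2)] by (rule degree_mult_le)
  also have "\<dots> \<le> Suc (card J)"
    using insert(3) by simp
  finally show ?case
    using insert(1,2) by simp
qed simp_all

lemma inj_on_sin_sq: "inj_on (\<lambda>t. sin t ^ 2) {0..pi/2}"
proof (rule inj_onI)
  fix s t assume s: "s \<in> {0..pi/2}" and t: "t \<in> {0..pi/2}" and eq: "sin s ^ 2 = sin t ^ 2"
  have "s = arcsin (sin s)"
    using s by (intro arcsin_sin[symmetric]) auto
  also have "sin s = sin t"
    using eq s t by (simp add: sin_ge_zero)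
  also have "arcsin (sin t) = t"
    using t by (intro arcsin_sin) auto
  finally show "s = t" .
qed

lemma choose_second_difference:
  "(Suc (Suc N) choose Suc (Suc j)) + (N choose Suc (Suc j)) = 2 * (Suc N choose Suc (Suc j)) + (N choose j)"
  by simp

fun sin_ratio_poly :: "nat \<Rightarrow> real poly" where
  "sin_ratio_poly 0 = 0"
| "sin_ratio_poly (Suc 0) = 1"
| "sin_ratio_poly (Suc (Suc n)) = smult 2 ([:1, -2:] * sin_ratio_poly (Suc n)) - sin_ratio_poly n"

lemma sin_ratio_poly_eval: "sin (2 * real n * t) = sin (2 * t) * poly (sin_ratio_poly n) (sin t ^ 2)"
proof (induction n rule: sin_ratio_poly.induct)
  case (3 n)
  define u where "u = 2 * real (Suc n) * t"
  have "2 * real (Suc (Suc n)) * t = u + 2 * t" "2 * real n * t = u - 2 * t"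
    by (simp_all add: u_def algebra_simps)
  then have "sin (2 * real (Suc (Suc n)) * t) = 2 * sin u * cos (2 * t) - sin (2 * real n * t)"
    by (simp add: sin_add sin_diff)
  also have "\<dots> = sin (2 * t) * poly (sin_ratio_poly (Suc (Suc n))) (sin t ^ 2)"
    unfolding u_def 3 cos_double_sin by (simp add: algebra_simps)
  finally show ?case .
qed simp_all

lemma coeff_sin_ratio_poly: "coeff (sin_ratio_poly n) k = (-4) ^ k * real (n + k choose (2 * k + 1))"
proof (induction n arbitrary: k rule: sin_ratio_poly.induct)
  case 1
  show ?case by simp
next
  case 2
  show ?case by (cases k) (simp_all add: binomial_eq_0)
next
  case (3 n)
  show ?case
  proof (cases k)
    case 0
    have "coeff (sin_ratio_poly (Suc (Suc n))) 0 =
        2 * coeff (sin_ratio_poly (Suc n)) 0 - coeff (sin_ratio_poly n) 0"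
      by simp
    then show ?thesis
      using 3 by (simp add: 0)
  next
    case (Suc m)
    let ?N = "Suc (n + m)" and ?j = "Suc (2 * m)"
    have "coeff (sin_ratio_poly (Suc (Suc n))) (Suc m) =
        2 * coeff (sin_ratio_poly (Suc n)) (Suc m) - 4 * coeff (sin_ratio_poly (Suc n)) m
        - coeff (sin_ratio_poly n) (Suc m)"
      by simp
    also have "\<dots> = (-4) ^ Suc m * (2 * real (Suc ?N choose Suc (Suc ?j)) + real (?N choose ?j)
        - real (?N choose Suc (Suc ?j)))"
      using 3 by (simp del: binomial_Suc_Suc add: algebra_simps)
    also have "\<dots> = (-4) ^ Suc m * real (Suc (Suc ?N) choose Suc (Suc ?j))"
      using choose_second_difference[of ?N ?j]
      by (metis add_diff_cancel_right' of_nat_add of_nat_mult of_nat_numeral)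
    finally show ?thesis
      by (simp del: binomial_Suc_Suc add: Suc)
  qed
qed

lemma degree_sin_ratio_poly: "degree (sin_ratio_poly n) \<le> n - 1"
  by (rule degree_le) (simp add: coeff_sin_ratio_poly binomial_eq_0)

lemma sin_ratio_poly_root:
  assumes "0 < j" "j < n"
  shows "poly (sin_ratio_poly n) (sin (real j * pi / (2 * real n)) ^ 2) = 0"
proof -
  define t where "t = real j * pi / (2 * real n)"
  have "sin (2 * real n * t) = 0"
    using assms by (simp add: t_def)
  moreover have "sin (2 * t) \<noteq> 0"
    using assms by (intro sin_gt_zero[THEN less_imp_neq, symmetric]) (simp_all add: t_def field_simps)
  ultimately show ?thesis
    using sin_ratio_poly_eval[of n t] by (simp add: t_def)
qed

lemma inj_on_sin_sq_multiples:
  assumes "0 < n"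
  shows "inj_on (\<lambda>j. sin (real j * pi / (2 * real n)) ^ 2) {1..n-1}"
proof -
  have "inj_on (\<lambda>j. real j * pi / (2 * real n)) {1..n-1}"
    using assms by (intro inj_onI) simp
  moreover have "(\<lambda>j. real j * pi / (2 * real n)) ` {1..n-1} \<subseteq> {0..pi/2}"
    using assms by (auto simp: field_simps)
  ultimately show ?thesis
    using comp_inj_on[OF _ inj_on_subset[OF inj_on_sin_sq]] by (simp add: comp_def)
qed

lemma prod_csc_sq_factors:
  assumes "0 < n"
  shows "(\<Prod>j\<in>{1..n-1}. [:1, 1 / sin (real j * pi / (2 * real n)) ^ 2:])
    = smult (1 / real n) (pcompose (sin_ratio_poly n) [:0, -1:])"
    (is "?P = ?Q")
proof (rule poly_eqI_degree)
  define x where "x j = sin (real j * pi / (2 * real n)) ^ 2" for j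
  define A where "A = insert 0 ((\<lambda>j. - x j) ` {1..n-1})"
  have x_pos: "x j > 0" if "j \<in> {1..n-1}" for j
    using that assms unfolding x_def by (intro zero_less_power sin_gt_zero) (auto simp: field_simps)
  have "card A = n"
  proof -
    have "inj_on (\<lambda>j. - x j) {1..n-1}"
      using inj_on_sin_sq_multiples[OF assms] by (auto simp: inj_on_def x_def)
    moreover have "0 \<notin> (\<lambda>j. - x j) ` {1..n-1}"
      using x_pos by force
    ultimately show ?thesis
      using assms by (simp add: A_def card_image)
  qed
  show "degree ?P < card A"
    using degree_prod_linear_factors_le[of "\<lambda>_. 1" "\<lambda>j. 1 / sin (real j * pi / (2 * real n)) ^ 2" "{1..n-1}"]
      \<open>card A = n\<close> assms by simp
  have "degree ?Q \<le> degree (sin_ratio_poly n)"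
    using degree_smult_le[of "1 / real n" "pcompose (sin_ratio_poly n) [:0, -1:]"]
    by (simp add: degree_pcompose)
  then show "degree ?Q < card A"
    using degree_sin_ratio_poly[of n] \<open>card A = n\<close> assms by linarith
  show "poly ?P t = poly ?Q t" if "t \<in> A" for t
    using that unfolding A_def
  proof
    assume "t = 0"
    have "coeff (sin_ratio_poly n) 0 = real n"
      by (simp add: coeff_sin_ratio_poly)
    then show ?thesis
      using assms \<open>t = 0\<close> by (simp add: poly_prod poly_pcompose poly_0_coeff_0[of "sin_ratio_poly n"])
  next
    assume "t \<in> (\<lambda>j. - x j) ` {1..n-1}"
    then obtain j where j: "j \<in> {1..n-1}" "t = - x j"
      by blast
    have "poly ?P t = (\<Prod>i\<in>{1..n-1}. 1 + t / x i)"
      by (simp add: poly_prod x_def)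
    also have "\<dots> = 0"
    proof (rule prod_zero)
      show "\<exists>i\<in>{1..n-1}. 1 + t / x i = 0"
        using j x_pos[OF j(1)] by (intro bexI[of _ j]) simp_all
    qed simp
    also have "0 = poly ?Q t"
    proof -
      have "0 < j" "j < n"
        using j(1) by auto
      then have "poly (sin_ratio_poly n) (x j) = 0"
        unfolding x_def by (rule sin_ratio_poly_root)
      then show ?thesis
        using j(2) by (simp add: poly_pcompose)
    qed
    finally show ?thesis .
  qed
qed

theorem mainTheorem9:
  fixes n k :: nat
  assumes "n \<ge> 2" and "k \<le> n - 1"
  shows "elem_sym k (\<lambda>j. 1 / (sin (real j * pi / (2 * real n)))\<^sup>2) {1..n-1}
         = 4 ^ k * fact (n + k) * fact (n - 1) / (fact (2 * k + 1) * fact (n - k - 1) * fact n)"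
proof -
  have "elem_sym k (\<lambda>j. 1 / (sin (real j * pi / (2 * real n)))\<^sup>2) {1..n-1}
      = coeff (smult (1 / real n) (pcompose (sin_ratio_poly n) [:0, -1:])) k"
    using assms by (subst elem_sym_eq_coeff_prod) (simp_all only: prod_csc_sq_factors finite_atLeastAtMost)
  also have "\<dots> = 4 ^ k * real (n + k choose (2 * k + 1)) / real n"
    by (simp add: coeff_pcompose_linear coeff_sin_ratio_poly flip: power_mult_distrib)
  also have "\<dots> = 4 ^ k * fact (n + k) * fact (n - 1) / (fact (2 * k + 1) * fact (n - k - 1) * fact n)"
  proof -
    have "n + k - (2 * k + 1) = n - k - 1" by simp
    moreover have "(fact n :: real) = real n * fact (n - 1)"
      using assms by (simp add: fact_reduce)
    ultimately show ?thesis
      using assms by (simp add: binomial_fact)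
  qed
  finally show ?thesis .
qed

end
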